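(* Let $M$ be a monoid and let $\sigma : X^* \to M$ and $\tau : Y^* \to M$ be finite monoid choices of generators. Then $L_\sigma(M)$ is an inverse morphic image of $L_\tau(M)$, i.e. there is a monoid morphism $\rho : \hat{X}^* \to \hat{Y}^*$ with $L_\sigma(M) = \{w \in \hat{X}^* : w\rho \in L_\tau(M)\}$. The corresponding statement holds for a semigroup $S$ with finite semigroup choices of generators $\sigma : X^+ \to S$ and $\tau : Y^+ \to S$.
   Context: Maps are written on the right. $X^*$, $X^+$: free monoid and free semigroup on $X$. For a monoid $M$ and surjective monoid morphism $\sigma : X^* \to M$, let $\overline{X} = \{\overline{x} : x \in X\}$ be new symbols, $\hat{X} = X \cup \overline{X}$; the loop automaton has vertex set $M$, for each $a \in M$, $x \in X$ an edge $a \to a(x\sigma)$ labelled $x$ and an edge $a(x\sigma) \to a$ labelled $\overline{x}$; the loop problem $L_\sigma(M) \subseteq \hat{X}^*$ is the set of labels of paths from the identity to the identity. For a semigroup $S$ and surjective morphism $\sigma : X^+ \to S$, $L_\sigma(S)$ is the loop problem of $S^1$ ($S$ with a new identity adjoined, even if one exists) with respect to the unique extension $\sigma^1 : X^* \to S^1$. *)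

theory Defs
  imports Main
begin

text \<open>Words are lists. For an alphabet X, the letters of hat X are pairs (x, b)
 with x in X; (x, False) is x and (x, True) is the barred letter.\<close>

definition hat :: "'x set \<Rightarrow> ('x \<times> bool) set" where
  "hat X = X \<times> UNIV"

definition monoid_choice :: "'x set \<Rightarrow> ('x list \<Rightarrow> 'm::monoid_mult) \<Rightarrow> bool" where
  "monoid_choice X \<sigma> \<longleftrightarrow> finite X \<and> \<sigma> [] = 1 \<and>
     (\<forall>u\<in>lists X. \<forall>v\<in>lists X. \<sigma> (u @ v) = \<sigma> u * \<sigma> v) \<and>
     (\<forall>m. \<exists>w\<in>lists X. \<sigma> w = m)"

definition semigroup_choice :: "'x set \<Rightarrow> ('x list \<Rightarrow> 's::semigroup_mult) \<Rightarrow> bool" where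
  "semigroup_choice X \<sigma> \<longleftrightarrow> finite X \<and>
     (\<forall>u\<in>lists X - {[]}. \<forall>v\<in>lists X - {[]}. \<sigma> (u @ v) = \<sigma> u * \<sigma> v) \<and>
     (\<forall>s. \<exists>w\<in>lists X - {[]}. \<sigma> w = s)"

definition free_morphism :: "'a set \<Rightarrow> 'b set \<Rightarrow> ('a list \<Rightarrow> 'b list) \<Rightarrow> bool" where
  "free_morphism A B \<rho> \<longleftrightarrow> \<rho> [] = [] \<and> (\<forall>w\<in>lists A. \<rho> w \<in> lists B) \<and>
     (\<forall>u\<in>lists A. \<forall>v\<in>lists A. \<rho> (u @ v) = \<rho> u @ \<rho> v)"

text \<open>Paths in the loop automaton of a monoid with multiplication mult, where gen x
 is the image of the generator x: edge a \<rightarrow> mult a (gen x) labelled x and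
 edge mult a (gen x) \<rightarrow> a labelled x-bar.\<close>
inductive lpath :: "('v \<Rightarrow> 'v \<Rightarrow> 'v) \<Rightarrow> ('x \<Rightarrow> 'v) \<Rightarrow> 'v \<Rightarrow> ('x \<times> bool) list \<Rightarrow> 'v \<Rightarrow> bool"
  for mult gen where
  nil: "lpath mult gen a [] a"
| fwd: "lpath mult gen (mult a (gen x)) w b \<Longrightarrow> lpath mult gen a ((x, False) # w) b"
| bwd: "lpath mult gen a w b \<Longrightarrow> lpath mult gen (mult a (gen x)) ((x, True) # w) b"

definition loop_problem_gen ::
  "('v \<Rightarrow> 'v \<Rightarrow> 'v) \<Rightarrow> 'v \<Rightarrow> 'x set \<Rightarrow> ('x \<Rightarrow> 'v) \<Rightarrow> ('x \<times> bool) list set" where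
  "loop_problem_gen mult e X gen = {w \<in> lists (hat X). lpath mult gen e w e}"

definition loop_problem :: "'x set \<Rightarrow> ('x list \<Rightarrow> 'm::monoid_mult) \<Rightarrow> ('x \<times> bool) list set" where
  "loop_problem X \<sigma> = loop_problem_gen (*) 1 X (\<lambda>x. \<sigma> [x])"

text \<open>S^1: S with a new identity adjoined, modelled as 's option with None the new identity.\<close>
fun adj_mult :: "'s::semigroup_mult option \<Rightarrow> 's option \<Rightarrow> 's option" where
  "adj_mult None b = b"
| "adj_mult a None = a"
| "adj_mult (Some a) (Some b) = Some (a * b)"

definition ext1 :: "('x list \<Rightarrow> 's) \<Rightarrow> 'x list \<Rightarrow> 's option" where
  "ext1 \<sigma> w = (if w = [] then None else Some (\<sigma> w))"

definition sg_loop_problem :: "'x set \<Rightarrow> ('x list \<Rightarrow> 's::semigroup_mult) \<Rightarrow> ('x \<times> bool) list set" where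
  "sg_loop_problem X \<sigma> = loop_problem_gen adj_mult None X (\<lambda>x. ext1 \<sigma> [x])"

end

theory Submission
  imports Defs
begin

text \<open>Choose for every generator x of \<sigma> a word u x over Y with the same image under \<tau>, and
  let \<rho> replace x by u x and x-bar by the formal inverse of u x (reversed, all letters barred).
  Both loop automata have the same vertex set, and reading u x forward from a vertex a leads
  to a(x\<sigma>), while reading its formal inverse from a(x\<sigma>) leads back to a. Hence paths labelled
  w in the automaton of \<sigma> correspond exactly to paths labelled w\<rho> with the same end points in
  the automaton of \<tau>. For a semigroup the same argument runs in S^1, using that the words
  u x are nonempty.\<close>

lemma lpath_Nil_iff [simp]: "lpath m g a [] b \<longleftrightarrow> a = b"
  by (auto elim: lpath.cases intro: lpath.intros)

lemma lpath_Cons_False_iff [simp]: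
  "lpath m g a ((x, False) # w) b \<longleftrightarrow> lpath m g (m a (g x)) w b"
  by (auto elim: lpath.cases intro: lpath.intros)

lemma lpath_Cons_True_iff [simp]:
  "lpath m g c ((x, True) # w) b \<longleftrightarrow> (\<exists>a. c = m a (g x) \<and> lpath m g a w b)"
  by (auto elim: lpath.cases intro: lpath.intros)

lemma lpath_append_iff:
  "lpath m g a (v @ w) b \<longleftrightarrow> (\<exists>c. lpath m g a v c \<and> lpath m g c w b)"
proof (induction v arbitrary: a)
  case Nil
  then show ?case by simp
next
  case (Cons p v)
  then show ?case by (cases p; cases "snd p") auto
qed

lemma lpath_map_False_iff:
  "lpath m g a (map (\<lambda>y. (y, False)) u) b \<longleftrightarrow> b = foldl (\<lambda>c y. m c (g y)) a u"
  by (induction u arbitrary: a) auto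

lemma lpath_rev_map_True_iff:
  "lpath m g c (rev (map (\<lambda>y. (y, True)) u)) d \<longleftrightarrow> c = foldl (\<lambda>c y. m c (g y)) d u"
  by (induction u arbitrary: c rule: rev_induct) (auto simp: lpath_append_iff)

definition hat_subst :: "('x \<Rightarrow> 'y list) \<Rightarrow> ('x \<times> bool) list \<Rightarrow> ('y \<times> bool) list" where
  "hat_subst u w = concat (map (\<lambda>(x, t). if t then rev (map (\<lambda>y. (y, True)) (u x))
                                         else map (\<lambda>y. (y, False)) (u x)) w)"

lemma hat_subst_Cons:
  "hat_subst u ((x, t) # w) =
     (if t then rev (map (\<lambda>y. (y, True)) (u x)) else map (\<lambda>y. (y, False)) (u x)) @ hat_subst u w"
  by (simp add: hat_subst_def)

lemma free_morphism_hat_subst: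
  assumes "\<forall>x\<in>X. u x \<in> lists Y"
  shows "free_morphism (hat X) (hat Y) (hat_subst u)"
  using assms unfolding free_morphism_def hat_subst_def hat_def by (fastforce split: if_splits)

lemma lpath_hat_subst_iff:
  assumes reads: "\<forall>x\<in>X. \<forall>a. foldl (\<lambda>c y. m c (gY y)) a (u x) = m a (gX x)"
    and "w \<in> lists (hat X)"
  shows "lpath m gY a (hat_subst u w) b \<longleftrightarrow> lpath m gX a w b"
  using \<open>w \<in> lists (hat X)\<close>
proof (induction w arbitrary: a)
  case Nil
  then show ?case by (simp add: hat_subst_def)
next
  case (Cons p w)
  obtain x t where p: "p = (x, t)" by (cases p)
  with Cons.hyps have "x \<in> X" by (auto simp: hat_def)
  with reads Cons.IH show ?case
    by (cases t) (auto simp: p hat_subst_Cons lpath_append_iff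
                             lpath_map_False_iff lpath_rev_map_True_iff)
qed

lemma loop_problem_gen_eq_preimage_hat_subst:
  assumes "\<forall>x\<in>X. u x \<in> lists Y"
    and "\<forall>x\<in>X. \<forall>a. foldl (\<lambda>c y. m c (gY y)) a (u x) = m a (gX x)"
  shows "loop_problem_gen m e X gX = {w \<in> lists (hat X). hat_subst u w \<in> loop_problem_gen m e Y gY}"
proof -
  have "hat_subst u w \<in> lists (hat Y)" if "w \<in> lists (hat X)" for w
    using free_morphism_hat_subst[OF assms(1)] that unfolding free_morphism_def by blast
  with lpath_hat_subst_iff[OF assms(2)] show ?thesis
    unfolding loop_problem_gen_def by blast
qed

lemma foldl_monoid_choice:
  assumes "monoid_choice Y \<tau>" and "u \<in> lists Y"
  shows "foldl (\<lambda>c y. c * \<tau> [y]) a u = a * \<tau> u"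
  using \<open>u \<in> lists Y\<close>
proof (induction u arbitrary: a)
  case Nil
  with assms(1) show ?case by (simp add: monoid_choice_def)
next
  case (Cons y u)
  with assms(1) have "\<tau> ([y] @ u) = \<tau> [y] * \<tau> u"
    unfolding monoid_choice_def by (simp del: append_Cons append_Nil)
  with Cons show ?case by (simp add: mult.assoc)
qed

lemma foldl_adj_mult_semigroup_choice:
  assumes "semigroup_choice Y \<tau>" and "u \<in> lists Y" and "u \<noteq> []"
  shows "foldl (\<lambda>c y. adj_mult c (ext1 \<tau> [y])) a u = adj_mult a (Some (\<tau> u))"
  using \<open>u \<in> lists Y\<close> \<open>u \<noteq> []\<close>
proof (induction u arbitrary: a)
  case Nil
  then show ?case by simp
next
  case (Cons y u)
  show ?case
  proof (cases "u = []")
    case True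
    then show ?thesis by (simp add: ext1_def)
  next
    case False
    with assms(1) Cons.hyps have "\<tau> ([y] @ u) = \<tau> [y] * \<tau> u"
      unfolding semigroup_choice_def by (simp del: append_Cons append_Nil)
    with Cons False show ?thesis
      by (cases a) (simp_all add: ext1_def mult.assoc)
  qed
qed

lemma loop_problem_inverse_morphic_image:
  fixes \<sigma> :: "'x list \<Rightarrow> 'm::monoid_mult" and \<tau> :: "'y list \<Rightarrow> 'm"
  assumes "monoid_choice X \<sigma>" and "monoid_choice Y \<tau>"
  shows "\<exists>\<rho>. free_morphism (hat X) (hat Y) \<rho> \<and>
           loop_problem X \<sigma> = {w \<in> lists (hat X). \<rho> w \<in> loop_problem Y \<tau>}"
proof -
  from assms(2) have "\<forall>x. \<exists>v. v \<in> lists Y \<and> \<tau> v = \<sigma> [x]"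
    unfolding monoid_choice_def by blast
  then obtain u where u: "\<forall>x. u x \<in> lists Y \<and> \<tau> (u x) = \<sigma> [x]"
    by (rule choice[THEN exE])
  then have "\<forall>x\<in>X. \<forall>a. foldl (\<lambda>c y. c * \<tau> [y]) a (u x) = a * \<sigma> [x]"
    by (simp add: foldl_monoid_choice[OF assms(2)])
  with u have "loop_problem X \<sigma> = {w \<in> lists (hat X). hat_subst u w \<in> loop_problem Y \<tau>}"
    unfolding loop_problem_def by (simp add: loop_problem_gen_eq_preimage_hat_subst)
  with u show ?thesis
    by (blast intro: free_morphism_hat_subst)
qed

lemma sg_loop_problem_inverse_morphic_image:
  fixes \<sigma> :: "'x list \<Rightarrow> 's::semigroup_mult" and \<tau> :: "'y list \<Rightarrow> 's"
  assumes "semigroup_choice X \<sigma>" and "semigroup_choice Y \<tau>"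
  shows "\<exists>\<rho>. free_morphism (hat X) (hat Y) \<rho> \<and>
           sg_loop_problem X \<sigma> = {w \<in> lists (hat X). \<rho> w \<in> sg_loop_problem Y \<tau>}"
proof -
  from assms(2) have "\<forall>x. \<exists>v. v \<in> lists Y \<and> v \<noteq> [] \<and> \<tau> v = \<sigma> [x]"
    unfolding semigroup_choice_def by blast
  then obtain u where u: "\<forall>x. u x \<in> lists Y \<and> u x \<noteq> [] \<and> \<tau> (u x) = \<sigma> [x]"
    by (rule choice[THEN exE])
  then have "\<forall>x\<in>X. \<forall>a. foldl (\<lambda>c y. adj_mult c (ext1 \<tau> [y])) a (u x) = adj_mult a (ext1 \<sigma> [x])"
    using foldl_adj_mult_semigroup_choice[OF assms(2)] by (simp add: ext1_def)
  with u have "sg_loop_problem X \<sigma> = {w \<in> lists (hat X). hat_subst u w \<in> sg_loop_problem Y \<tau>}"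
    unfolding sg_loop_problem_def by (simp add: loop_problem_gen_eq_preimage_hat_subst)
  with u show ?thesis
    by (blast intro: free_morphism_hat_subst)
qed

theorem proposition4p6:
  shows "(\<forall>(X :: 'x set) (Y :: 'y set) (\<sigma> :: 'x list \<Rightarrow> 'm::monoid_mult) (\<tau> :: 'y list \<Rightarrow> 'm).
            monoid_choice X \<sigma> \<and> monoid_choice Y \<tau> \<longrightarrow>
            (\<exists>\<rho>. free_morphism (hat X) (hat Y) \<rho> \<and>
                 loop_problem X \<sigma> = {w \<in> lists (hat X). \<rho> w \<in> loop_problem Y \<tau>}))
       \<and> (\<forall>(X :: 'x set) (Y :: 'y set) (\<sigma> :: 'x list \<Rightarrow> 's::semigroup_mult) (\<tau> :: 'y list \<Rightarrow> 's).
            semigroup_choice X \<sigma> \<and> semigroup_choice Y \<tau> \<longrightarrow>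
            (\<exists>\<rho>. free_morphism (hat X) (hat Y) \<rho> \<and>
                 sg_loop_problem X \<sigma> = {w \<in> lists (hat X). \<rho> w \<in> sg_loop_problem Y \<tau>}))"
  using loop_problem_inverse_morphic_image sg_loop_problem_inverse_morphic_image by blast

end
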